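(* Let $G\in\mathcal{P}_*(\Theta)$ and let $l:\mathbb{N}\to\mathbb{N}$ satisfy $l(n)\in\{1,\ldots,2^n\}$ for every $n$ and be such that the sequence of sets $(\bar\Theta_{n,l(n)})_{n\in\mathbb{N}}$ is decreasing. Then $\lim_{n\to\infty}|\bar\Theta_{n,l(n)}|=0$. Moreover, $\lim_{n\to\infty}\max_{l\in\{1,\ldots,2^n\}}|\bar\Theta_{n,l}|=0$.
   Context: $|A|$ denotes Lebesgue measure. $\Theta\subseteq\mathbb{R}$ is $\mathbb{R}$, a closed half-line, or a compact interval with nonempty interior. $\mathcal{P}_*(\Theta)$ is the set of Borel probability measures on $\Theta$ whose support is a non-degenerate compact interval. $G$ is identified with its distribution function; $b_G(a_1,a_2]=\int_{(a_1,a_2]}\theta\,dG/(G(a_2)-G(a_1))$ if $G(a_2)>G(a_1)$, else $a_1$. SBA: $\mu_{1,1}=\int\theta\,dG$; for $j\ge2$, $\mu_{j,2l}=\mu_{j-1,l}$, $\mu_{j,2l-1}=b_G(\mu_{j-1,l-1},\mu_{j-1,l}]$, with $\mu_{j,0}=\inf\Theta$, $\mu_{j,2^j}=\sup\Theta$. Level $n$ intervals: $\Theta_{n,1}=[\mu_{n,0},\mu_{n,1}]$ if $\mu_{n,0}>-\infty$, else $(\mu_{n,0},\mu_{n,1}]$; $\Theta_{n,l}=(\mu_{n,l-1},\mu_{n,l}]$ for $2\le l\le 2^n-1$; $\Theta_{n,2^n}=(\mu_{n,2^n-1},\mu_{n,2^n}]$ if $\mu_{n,2^n}<\infty$, else $(\mu_{n,2^n-1},\infty)$.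 $\bar\Theta_{n,1}=\Theta_{n,1}\cap\operatorname{supp}(G)$, $\bar\Theta_{n,l}=\Theta_{n,l}$ for $2\le l\le 2^n-1$, $\bar\Theta_{n,2^n}=\Theta_{n,2^n}\cap\operatorname{supp}(G)$. *)

theory Defs
  imports "HOL-Probability.Probability"
begin

text \<open>The parameter space Theta is described by its endpoints lo = inf Theta, hi = sup Theta
 (extended reals, lo < hi): Theta = {x. lo <= x <= hi}. This covers R, closed half-lines and
 compact intervals with nonempty interior.\<close>
definition Theta_set :: "ereal \<Rightarrow> ereal \<Rightarrow> real set" where
  "Theta_set lo hi = {x. lo \<le> ereal x \<and> ereal x \<le> hi}"

definition admissible_Theta :: "ereal \<Rightarrow> ereal \<Rightarrow> bool" where
  "admissible_Theta lo hi \<longleftrightarrow> lo < hi"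

definition msupp :: "real measure \<Rightarrow> real set" where
  "msupp G = {x. \<forall>e>0. 0 < emeasure G (ball x e)}"

text \<open>G in P_*(Theta): Borel probability measure on Theta (extended by zero to R)
  whose support is a non-degenerate compact interval.\<close>
definition P_star :: "ereal \<Rightarrow> ereal \<Rightarrow> real measure \<Rightarrow> bool" where
  "P_star lo hi G \<longleftrightarrow> prob_space G \<and> sets G = sets borel \<and>
     emeasure G (Theta_set lo hi) = 1 \<and> (\<exists>a b. a < b \<and> msupp G = {a..b})"

text \<open>Distribution function, evaluated at extended reals (G(-inf) = 0, G(inf) = 1).\<close>
definition cdfE :: "real measure \<Rightarrow> ereal \<Rightarrow> real" where
  "cdfE G a = measure G {x. ereal x \<le> a}"

definition bG :: "real measure \<Rightarrow> ereal \<Rightarrow> ereal \<Rightarrow> ereal" where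
  "bG G a1 a2 = (if cdfE G a2 > cdfE G a1
      then ereal ((LINT x:{x. a1 < ereal x \<and> ereal x \<le> a2}|G. x) / (cdfE G a2 - cdfE G a1))
      else a1)"

text \<open>SBA points mu j l, for j >= 1 and 0 <= l <= 2^j. (Level 0 is a dummy.)\<close>
fun sba :: "ereal \<Rightarrow> ereal \<Rightarrow> real measure \<Rightarrow> nat \<Rightarrow> nat \<Rightarrow> ereal" where
  "sba lo hi G 0 l = lo"
| "sba lo hi G (Suc j) l =
     (if l = 0 then lo
      else if l = 2 ^ Suc j then hi
      else if j = 0 then ereal (integral\<^sup>L G (\<lambda>x. x))
      else if even l then sba lo hi G j (l div 2)
      else bG G (sba lo hi G j (l div 2)) (sba lo hi G j (l div 2 + 1)))"

definition Theta_nl :: "ereal \<Rightarrow> ereal \<Rightarrow> real measure \<Rightarrow> nat \<Rightarrow> nat \<Rightarrow> real set" where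
  "Theta_nl lo hi G n l =
    (let m = sba lo hi G n in
     if l = 1 then
       (if m 0 > -\<infinity> then {x. m 0 \<le> ereal x \<and> ereal x \<le> m 1}
        else {x. m 0 < ereal x \<and> ereal x \<le> m 1})
     else if l = 2 ^ n then
       (if m (2 ^ n) < \<infinity> then {x. m (2^n - 1) < ereal x \<and> ereal x \<le> m (2 ^ n)}
        else {x. m (2^n - 1) < ereal x})
     else {x. m (l - 1) < ereal x \<and> ereal x \<le> m l})"

definition Theta_bar :: "ereal \<Rightarrow> ereal \<Rightarrow> real measure \<Rightarrow> nat \<Rightarrow> nat \<Rightarrow> real set" where
  "Theta_bar lo hi G n l =
    (if l = 1 \<or> l = 2 ^ n then Theta_nl lo hi G n l \<inter> msupp G else Theta_nl lo hi G n l)"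

end

theory Submission
  imports Defs
begin

(*
  For n >= 1 the cells of level n + 1 arise by splitting every cell of level n at its G-mean, so
  the partitions refine, every cell carries positive mass and all interior nodes lie strictly
  inside the support [a, b].  The potential  sum_C (int_C x dG)^2 / G(C)  over the cells C of
  level n is the squared L^2-norm of the conditional expectation of x given the level-n
  partition; it is bounded by (|a| + |b|)^2, and splitting a cell at its mean increases it by at
  least the square of the mass-weighted distance of the lower half from the mean.  Since G gives
  mass at least some kappa > 0 to every interval of length eps/4 inside [a, b], a cell of length
  >= eps forces an increment of at least (eps kappa / 4)^2.  A cell of length >= eps at every
  level would therefore make the potential unbounded, so the mesh of the partitions tends to 0;
  and each Theta_bar n l is contained in a cell of level n.
*)

lemma sum_lessThan_double:
  "(\<Sum>i<2 * (n::nat). f i) = (\<Sum>i<n. f (2 * i) + f (2 * i + 1))"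
  by (induction n) (simp_all add: algebra_simps)

lemma two_le_pow: "1 \<le> n \<Longrightarrow> 2 \<le> (2::nat) ^ n"
  using power_increasing[of 1 n "2::nat"] by simp

lemma odd_neq_two_pow_Suc: "2 * j + 1 \<noteq> (2::nat) ^ Suc n"
  by (metis even_add even_mult_iff even_numeral even_power odd_one zero_less_Suc)

lemma split_sq_div_gain_ge:
  fixes sL sR wL wR :: real
  assumes wL: "0 < wL" "wL \<le> 1" and wR: "0 < wR"
  shows "((sL + sR) / (wL + wR) * wL - sL)^2 \<le> sL^2 / wL + sR^2 / wR - (sL + sR)^2 / (wL + wR)"
proof -
  define D where "D = (sL * wR - sR * wL)^2"
  define w where "w = wL + wR"
  have w: "0 < w" using wL wR by (simp add: w_def)
  have lhs: "((sL + sR) / (wL + wR) * wL - sL)^2 = D / w^2"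
    using w unfolding D_def w_def by (simp add: field_simps power2_eq_square)
  have rhs: "sL^2 / wL + sR^2 / wR - (sL + sR)^2 / (wL + wR) = D / (wL * wR * w)"
    using w wL wR unfolding D_def w_def by (simp add: field_simps power2_eq_square)
  have "wL * wR \<le> wR"
    using wL wR by (simp add: mult_le_cancel_right1)
  then have "wL * wR * w \<le> w * w"
    using wL w by (intro mult_right_mono) (auto simp: w_def)
  then have "D / (w * w) \<le> D / (wL * wR * w)"
    using wL wR w by (intro divide_left_mono) (auto simp: D_def)
  then show ?thesis using lhs rhs by (simp add: power2_eq_square)
qed

lemma grid_point_between:
  fixes a t h :: real
  assumes "0 < h" "a \<le> t"
  obtains j :: nat where "t \<le> a + real j * h" "a + real j * h < t + h"
proof
  define j where "j = nat \<lceil>(t - a) / h\<rceil>"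
  have j: "real j = \<lceil>(t - a) / h\<rceil>"
    using assms unfolding j_def by simp
  then have "(t - a) / h \<le> real j" "real j < (t - a) / h + 1"
    by linarith+
  then show "t \<le> a + real j * h" "a + real j * h < t + h"
    using assms by (simp_all add: field_simps)
qed

lemma set_integral_ge_mult_measure:
  fixes g :: "'a \<Rightarrow> real"
  assumes g: "set_integrable M S g" and T: "T \<in> sets M" "emeasure M T < \<infinity>" "T \<subseteq> S"
    and ge: "\<And>x. x \<in> T \<Longrightarrow> \<delta> \<le> g x" and nonneg: "AE x\<in>S in M. 0 \<le> g x"
  shows "\<delta> * measure M T \<le> (LINT x:S|M. g x)"
proof -
  have "\<delta> * measure M T = (\<integral>x. indicator T x * \<delta> \<partial>M)"
    using T by (simp add: mult.commute)
  also have "\<dots> \<le> (LINT x:S|M. g x)"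
    unfolding set_lebesgue_integral_def
  proof (rule integral_mono_AE)
    show "integrable M (\<lambda>x. indicator T x * \<delta>)"
      using T by (intro integrable_mult_left integrable_real_indicator) (auto simp: less_top)
    show "integrable M (\<lambda>x. indicator S x *\<^sub>R g x)"
      using g by (simp add: set_integrable_def)
    show "AE x in M. indicator T x * \<delta> \<le> indicator S x *\<^sub>R g x"
      using nonneg by eventually_elim (use ge T(3) in \<open>auto simp: indicator_def\<close>)
  qed
  finally show ?thesis .
qed

section \<open>Probability measures supported on a compact interval\<close>

lemma closed_Theta_set: "closed (Theta_set lo hi)"
  unfolding Theta_set_def
  by (intro closed_Collect_conj closed_Collect_le continuous_intros)

locale interval_supported_prob = prob_space G for G :: "real measure" +
  fixes a b :: real
  assumes sets_G [simp, measurable_cong]: "sets G = sets borel"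
    and a_less_b: "a < b"
    and msupp_eq: "msupp G = {a..b}"
begin

lemma space_G [simp]: "space G = UNIV"
  using sets_eq_imp_space_eq[OF sets_G] by simp

lemma emeasure_ball_pos: "x \<in> {a..b} \<Longrightarrow> 0 < e \<Longrightarrow> 0 < emeasure G (ball x e)"
  using msupp_eq unfolding msupp_def by auto

lemma support_subset_closed:
  assumes "closed C" and null: "emeasure G (- C) = 0"
  shows "{a..b} \<subseteq> C"
proof
  fix x assume x: "x \<in> {a..b}"
  show "x \<in> C"
  proof (rule ccontr)
    assume "x \<notin> C"
    moreover have "open (- C)" using \<open>closed C\<close> by (simp add: open_Compl)
    ultimately obtain e where "0 < e" "ball x e \<subseteq> - C"
      using open_contains_ball by blast
    then have "emeasure G (ball x e) \<le> emeasure G (- C)"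
      using \<open>closed C\<close> by (intro emeasure_mono) auto
    then have "emeasure G (ball x e) = 0" using null by simp
    with emeasure_ball_pos[OF x \<open>0 < e\<close>] show False by simp
  qed
qed

lemma AE_support: "AE x in G. a \<le> x \<and> x \<le> b"
proof -
  define F where "F = {ball x e | x e. e > 0 \<and> emeasure G (ball x e) = 0}"
  have "\<And>S. S\<in>F \<Longrightarrow> open S" by (auto simp: F_def)
  then obtain F' where F': "F' \<subseteq> F" "countable F'" "\<Union>F' = \<Union>F" using Lindelof by metis
  have sub: "- {a..b} \<subseteq> \<Union>F"
  proof
    fix x assume "x \<in> - {a..b}"
    then have "x \<notin> msupp G" using msupp_eq by auto
    then obtain e where "e>0" "\<not> 0 < emeasure G (ball x e)" unfolding msupp_def by auto
    then have "emeasure G (ball x e) = 0" by auto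
    then show "x \<in> \<Union>F" using \<open>e>0\<close> unfolding F_def by force
  qed
  have "(\<Union>S\<in>F'. S) \<in> null_sets G"
  proof (rule null_sets_UN'[OF F'(2)])
    fix S assume "S \<in> F'"
    then have "S \<in> F" using F' by auto
    then show "S \<in> null_sets G" unfolding F_def by auto
  qed
  then have "\<Union>F' \<in> null_sets G" by simp
  moreover have "- {a..b} \<in> sets G" by simp
  moreover have "- {a..b} \<subseteq> \<Union>F'" using sub F'(3) by simp
  ultimately have "- {a..b} \<in> null_sets G" by (rule null_sets_subset)
  then show ?thesis by (rule AE_I') auto
qed

lemma measure_greaterThanLessThan_pos:
  assumes "a \<le> u" "u < v" "v \<le> b"
  shows "0 < measure G {u<..<v}"
proof -
  have "ball ((u + v) / 2) ((v - u) / 2) = {u<..<v}"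
    by (auto simp: ball_eq_greaterThanLessThan field_simps)
  moreover have "0 < emeasure G (ball ((u + v) / 2) ((v - u) / 2))"
    using assms by (intro emeasure_ball_pos) auto
  ultimately show ?thesis by (simp add: emeasure_eq_measure)
qed

lemma integrable_id: "integrable G (\<lambda>x. x)"
proof (rule integrable_const_bound[where B = "\<bar>a\<bar> + \<bar>b\<bar>"])
  show "AE x in G. norm x \<le> \<bar>a\<bar> + \<bar>b\<bar>"
    using AE_support by eventually_elim auto
qed simp

lemma set_integrable_id: "S \<in> sets borel \<Longrightarrow> set_integrable G S (\<lambda>x. x)"
  unfolding set_integrable_def using integrable_id by (rule integrable_mult_indicator[rotated]) simp

lemma set_integrable_const: "S \<in> sets borel \<Longrightarrow> set_integrable G S (\<lambda>_. c :: real)"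
  unfolding set_integrable_def by (rule integrable_mult_indicator[rotated]) auto

definition moment :: "real set \<Rightarrow> real" where
  "moment S = (LINT x:S|G. x)"

lemma moment_Un:
  "S \<in> sets borel \<Longrightarrow> T \<in> sets borel \<Longrightarrow> S \<inter> T = {} \<Longrightarrow> moment (S \<union> T) = moment S + moment T"
  unfolding moment_def by (intro set_integral_Un set_integrable_id)

lemma moment_minus_const:
  "S \<in> sets borel \<Longrightarrow> (LINT x:S|G. x - c) = moment S - c * measure G S"
  by (simp add: moment_def set_integral_diff set_integrable_id set_integrable_const
      set_integral_const)

lemma const_minus_moment:
  "S \<in> sets borel \<Longrightarrow> (LINT x:S|G. c - x) = c * measure G S - moment S"
  by (simp add: moment_def set_integral_diff set_integrable_id set_integrable_const
      set_integral_const)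

lemma moment_lower_gap:
  assumes "S \<in> sets borel" "T \<in> sets borel" "T \<subseteq> S"
    and "\<And>x. x \<in> T \<Longrightarrow> c + \<delta> \<le> x" and "AE x\<in>S in G. c \<le> x"
  shows "\<delta> * measure G T \<le> moment S - c * measure G S"
proof -
  have "\<delta> * measure G T \<le> (LINT x:S|G. x - c)"
  proof (rule set_integral_ge_mult_measure)
    show "set_integrable G S (\<lambda>x. x - c)"
      using assms(1) by (intro set_integral_diff(1) set_integrable_id set_integrable_const)
    show "emeasure G T < \<infinity>"
      by (simp add: less_top[symmetric])
    show "\<delta> \<le> x - c" if "x \<in> T" for x
      using assms(4)[OF that] by simp
  qed (use assms in auto)
  then show ?thesis using moment_minus_const[OF assms(1)] by simp
qed

lemma moment_upper_gap:
  assumes "S \<in> sets borel" "T \<in> sets borel" "T \<subseteq> S"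
    and "\<And>x. x \<in> T \<Longrightarrow> x + \<delta> \<le> d" and "AE x\<in>S in G. x \<le> d"
  shows "\<delta> * measure G T \<le> d * measure G S - moment S"
proof -
  have "\<delta> * measure G T \<le> (LINT x:S|G. d - x)"
  proof (rule set_integral_ge_mult_measure)
    show "set_integrable G S (\<lambda>x. d - x)"
      using assms(1) by (intro set_integral_diff(1) set_integrable_id set_integrable_const)
    show "emeasure G T < \<infinity>"
      by (simp add: less_top[symmetric])
    show "\<delta> \<le> d - x" if "x \<in> T" for x
      using assms(4)[OF that] by simp
  qed (use assms in auto)
  then show ?thesis using const_minus_moment[OF assms(1)] by simp
qed

lemma moment_strict_bounds:
  assumes S: "S \<in> sets borel" and cd: "c < d" "a \<le> c" "d \<le> b"
    and inner: "{c<..<d} \<subseteq> S" and outer: "S \<inter> {a..b} \<subseteq> {c..d}"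
  shows "0 < measure G S" "c * measure G S < moment S" "moment S < d * measure G S"
proof -
  define h where "h = (c + d) / 2"
  have AE_cd: "AE x\<in>S in G. c \<le> x \<and> x \<le> d"
    using AE_support by eventually_elim (use outer in auto)
  have "0 < measure G {c<..<d}"
    using cd by (intro measure_greaterThanLessThan_pos) auto
  also have "\<dots> \<le> measure G S"
    using inner S by (intro finite_measure_mono) auto
  finally show "0 < measure G S" .
  have "(d - c) / 2 * measure G {h<..<d} \<le> moment S - c * measure G S"
  proof (rule moment_lower_gap[OF S])
    show "{h<..<d} \<subseteq> S" using inner by (auto simp: h_def)
    show "c + (d - c) / 2 \<le> x" if "x \<in> {h<..<d}" for x
      using that by (simp add: h_def field_simps)
    show "AE x\<in>S in G. c \<le> x" using AE_cd by eventually_elim auto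
  qed simp
  moreover have "0 < (d - c) / 2 * measure G {h<..<d}"
    using cd by (simp add: h_def measure_greaterThanLessThan_pos)
  ultimately show "c * measure G S < moment S" by linarith
  have "(d - c) / 2 * measure G {c<..<h} \<le> d * measure G S - moment S"
  proof (rule moment_upper_gap[OF S])
    show "{c<..<h} \<subseteq> S" using inner by (auto simp: h_def)
    show "x + (d - c) / 2 \<le> d" if "x \<in> {c<..<h}" for x
      using that by (simp add: h_def field_simps)
    show "AE x\<in>S in G. x \<le> d" using AE_cd by eventually_elim auto
  qed simp
  moreover have "0 < (d - c) / 2 * measure G {c<..<h}"
    using cd by (simp add: h_def measure_greaterThanLessThan_pos)
  ultimately show "moment S < d * measure G S" by linarith
qed

lemma abs_moment_le:
  assumes S: "S \<in> sets borel"
  shows "\<bar>moment S\<bar> \<le> (\<bar>a\<bar> + \<bar>b\<bar>) * measure G S"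
proof -
  define M where "M = \<bar>a\<bar> + \<bar>b\<bar>"
  have AE_M: "AE x\<in>S in G. - M \<le> x \<and> x \<le> M"
    using AE_support by eventually_elim (auto simp: M_def)
  have "moment S \<le> (LINT x:S|G. M)"
    unfolding moment_def using S AE_M
    by (intro set_integral_mono_AE set_integrable_id set_integrable_const) auto
  moreover have "(LINT x:S|G. - M) \<le> moment S"
    unfolding moment_def using S AE_M
    by (intro set_integral_mono_AE set_integrable_id set_integrable_const) auto
  ultimately show ?thesis
    using S by (simp add: set_integral_const M_def abs_le_iff algebra_simps)
qed

lemma sq_moment_div_le:
  assumes "S \<in> sets borel"
  shows "moment S ^ 2 / measure G S \<le> (\<bar>a\<bar> + \<bar>b\<bar>)^2 * measure G S"
proof (cases "measure G S = 0")
  case False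
  then have pos: "0 < measure G S" using measure_nonneg[of G S] by linarith
  have "\<bar>moment S\<bar>^2 \<le> ((\<bar>a\<bar> + \<bar>b\<bar>) * measure G S)^2"
    using abs_moment_le[OF assms] by (intro power_mono) auto
  then show ?thesis
    using pos by (simp add: pos_divide_le_eq power2_eq_square mult_ac)
qed simp

lemma measure_intervals_uniformly_pos:
  assumes "0 < \<delta>"
  obtains \<kappa> where "0 < \<kappa>" "\<And>t. a \<le> t \<Longrightarrow> t + \<delta> \<le> b \<Longrightarrow> \<kappa> \<le> measure G {t<..<t + \<delta>}"
proof
  (* Each such interval contains one of finitely many grid intervals of length delta/2 inside
     [a, b]; the extra element 1 keeps the minimum below well defined when there are none. *)
  define h where "h = \<delta> / 2"
  define J where "J = {j. j \<le> nat \<lceil>(b - a) / h\<rceil> \<and> a + real (Suc j) * h \<le> b}"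
  define f where "f j = measure G {a + real j * h<..<a + real (Suc j) * h}" for j
  define \<kappa> where "\<kappa> = Min (insert 1 (f ` J))"
  have h: "0 < h" using assms by (simp add: h_def)
  have "finite J" by (simp add: J_def)
  moreover have "0 < f j" if "j \<in> J" for j
    using that h unfolding f_def J_def by (intro measure_greaterThanLessThan_pos) auto
  ultimately show "0 < \<kappa>" by (simp add: \<kappa>_def)
  fix t assume t: "a \<le> t" "t + \<delta> \<le> b"
  obtain j where j: "t \<le> a + real j * h" "a + real j * h < t + h"
    using grid_point_between[OF h t(1)] .
  have right: "a + real (Suc j) * h \<le> t + \<delta>"
    using j by (simp add: h_def field_simps)
  have "real j \<le> (b - a) / h"
    using j t h by (simp add: pos_le_divide_eq h_def)
  then have "j \<le> nat \<lceil>(b - a) / h\<rceil>"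
    by linarith
  then have "j \<in> J"
    using right t by (simp add: J_def)
  then have "\<kappa> \<le> f j"
    using \<open>finite J\<close> by (simp add: \<kappa>_def)
  also have "f j \<le> measure G {t<..<t + \<delta>}"
    using j(1) right unfolding f_def by (intro finite_measure_mono) auto
  finally show "\<kappa> \<le> measure G {t<..<t + \<delta>}" .
qed

definition centroid :: "real set \<Rightarrow> real" where
  "centroid S = moment S / measure G S"

definition energy :: "real set \<Rightarrow> real" where
  "energy S = moment S ^ 2 / measure G S"

definition below_centroid :: "real set \<Rightarrow> real set" where
  "below_centroid P = P \<inter> {..centroid P}"

definition above_centroid :: "real set \<Rightarrow> real set" where
  "above_centroid P = P \<inter> {centroid P<..}"

lemma bG_eq_centroid:
  assumes "c \<le> d" and pos: "0 < measure G {x. c < ereal x \<and> ereal x \<le> d}"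
  shows "bG G c d = ereal (centroid {x. c < ereal x \<and> ereal x \<le> d})"
proof -
  have "{x. ereal x \<le> d} - {x. ereal x \<le> c} = {x. c < ereal x \<and> ereal x \<le> d}"
    by auto
  moreover have "measure G ({x. ereal x \<le> d} - {x. ereal x \<le> c})
      = measure G {x. ereal x \<le> d} - measure G {x. ereal x \<le> c}"
    using \<open>c \<le> d\<close> by (intro finite_measure_Diff) (auto intro: order_trans)
  ultimately have "cdfE G d - cdfE G c = measure G {x. c < ereal x \<and> ereal x \<le> d}"
    unfolding cdfE_def by simp
  then show ?thesis
    using pos by (simp add: bG_def centroid_def moment_def)
qed

lemma below_centroid_sets [measurable]: "P \<in> sets borel \<Longrightarrow> below_centroid P \<in> sets borel"
  by (simp add: below_centroid_def)

lemma above_centroid_sets [measurable]: "P \<in> sets borel \<Longrightarrow> above_centroid P \<in> sets borel"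
  by (simp add: above_centroid_def)

lemma centroid_split:
  "P = below_centroid P \<union> above_centroid P" "below_centroid P \<inter> above_centroid P = {}"
  by (auto simp: below_centroid_def above_centroid_def)

lemma measure_centroid_split:
  "P \<in> sets borel \<Longrightarrow> measure G P = measure G (below_centroid P) + measure G (above_centroid P)"
  by (subst centroid_split(1)) (intro finite_measure_Union; simp add: centroid_split(2))

lemma moment_centroid_split:
  "P \<in> sets borel \<Longrightarrow> moment P = moment (below_centroid P) + moment (above_centroid P)"
  by (subst centroid_split(1)) (intro moment_Un; simp add: centroid_split(2))

lemma energy_split_ge:
  assumes P: "P \<in> sets borel"
    and pos: "0 < measure G (below_centroid P)" "0 < measure G (above_centroid P)"
  shows "(centroid P * measure G (below_centroid P) - moment (below_centroid P))^2
    \<le> energy (below_centroid P) + energy (above_centroid P) - energy P"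
  using split_sq_div_gain_ge[OF pos(1) _ pos(2), of "moment (below_centroid P)" "moment (above_centroid P)"]
  by (simp add: energy_def centroid_def measure_centroid_split[OF P] moment_centroid_split[OF P])

lemma centroid_balance:
  assumes "P \<in> sets borel" "0 < measure G P"
  shows "centroid P * measure G (below_centroid P) - moment (below_centroid P)
    = moment (above_centroid P) - centroid P * measure G (above_centroid P)"
proof -
  have "centroid P * measure G P = moment P"
    using assms(2) by (simp add: centroid_def)
  then show ?thesis
    using measure_centroid_split[OF assms(1)] moment_centroid_split[OF assms(1)]
    by (simp add: algebra_simps)
qed

lemma below_centroid_deficit_ge:
  assumes P: "P \<in> sets borel" "0 < measure G P"
    and inner: "{u<..<v} \<subseteq> P" and uv: "a \<le> u" "v \<le> b" "\<epsilon> \<le> v - u" "0 < \<epsilon>"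
    and \<kappa>: "\<And>t. a \<le> t \<Longrightarrow> t + \<epsilon> / 4 \<le> b \<Longrightarrow> \<kappa> \<le> measure G {t<..<t + \<epsilon> / 4}"
  shows "\<epsilon> / 4 * \<kappa> \<le> centroid P * measure G (below_centroid P) - moment (below_centroid P)"
proof -
  define c where "c = centroid P"
  define L where "L = below_centroid P"
  define R where "R = above_centroid P"
  have balance: "c * measure G L - moment L = moment R - c * measure G R"
    using centroid_balance[OF P] by (simp add: c_def L_def R_def)
  (* The centroid cuts {u<..<v} into two pieces, one of length at least eps/2; the end
     interval of length eps/4 of that piece stays eps/4 away from the centroid. *)
  consider "\<epsilon> / 2 \<le> c - u" | "\<epsilon> / 2 \<le> v - c" using uv by linarith
  then have "\<epsilon> / 4 * \<kappa> \<le> c * measure G L - moment L"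
  proof cases
    case 1
    define T where "T = {u<..<u + \<epsilon> / 4}"
    have "\<epsilon> / 4 * measure G T \<le> c * measure G L - moment L"
    proof (rule moment_upper_gap)
      show "T \<subseteq> L"
        using inner uv 1 by (auto simp: T_def L_def below_centroid_def c_def)
      show "x + \<epsilon> / 4 \<le> c" if "x \<in> T" for x
        using that 1 by (simp add: T_def)
    qed (use P in \<open>simp_all add: T_def L_def below_centroid_def c_def\<close>)
    moreover have "\<kappa> \<le> measure G T"
      unfolding T_def using uv by (intro \<kappa>) auto
    then have "\<epsilon> / 4 * \<kappa> \<le> \<epsilon> / 4 * measure G T"
      using uv by (intro mult_left_mono) auto
    ultimately show ?thesis by linarith
  next
    case 2
    define T where "T = {v - \<epsilon> / 4<..<v}"
    have "\<epsilon> / 4 * measure G T \<le> moment R - c * measure G R"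
    proof (rule moment_lower_gap)
      show "T \<subseteq> R"
        using inner uv 2 by (auto simp: T_def R_def above_centroid_def c_def)
      show "c + \<epsilon> / 4 \<le> x" if "x \<in> T" for x
        using that 2 by (simp add: T_def)
    qed (use P in \<open>simp_all add: T_def R_def above_centroid_def c_def\<close>)
    moreover have "\<kappa> \<le> measure G T"
      using \<kappa>[of "v - \<epsilon> / 4"] uv by (simp add: T_def)
    then have "\<epsilon> / 4 * \<kappa> \<le> \<epsilon> / 4 * measure G T"
      using uv by (intro mult_left_mono) auto
    ultimately show ?thesis using balance by linarith
  qed
  then show ?thesis by (simp add: c_def L_def)
qed

lemma Theta_set_bounds:
  assumes "emeasure G (Theta_set lo hi) = 1"
  shows "lo \<le> ereal a" "ereal b \<le> hi"
proof -
  have Theta: "Theta_set lo hi \<in> sets borel"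
    using closed_Theta_set by (rule borel_closed)
  have "emeasure G (space G - Theta_set lo hi) = emeasure G (space G) - emeasure G (Theta_set lo hi)"
    using Theta by (intro emeasure_compl) (auto simp: assms)
  then have "emeasure G (- Theta_set lo hi) = 0"
    using emeasure_space_1 by (simp add: Compl_eq_Diff_UNIV assms)
  then have "{a..b} \<subseteq> Theta_set lo hi"
    by (rule support_subset_closed[OF closed_Theta_set])
  moreover have "a \<in> {a..b}" "b \<in> {a..b}"
    using a_less_b by auto
  ultimately show "lo \<le> ereal a" "ereal b \<le> hi"
    unfolding Theta_set_def by blast+
qed

end

section \<open>The SBA partitions\<close>

lemma sba_0 [simp]: "sba lo hi G n 0 = lo"
  by (cases n) auto

lemma sba_last: "1 \<le> n \<Longrightarrow> sba lo hi G n (2 ^ n) = hi"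
  by (cases n) auto

lemma sba_Suc_even:
  assumes "1 \<le> n" "j \<le> 2 ^ n"
  shows "sba lo hi G (Suc n) (2 * j) = sba lo hi G n j"
  using assms sba_last[of n] by (cases "j = 0 \<or> j = 2 ^ n") auto

lemma sba_Suc_odd:
  assumes "1 \<le> n" "j < 2 ^ n"
  shows "sba lo hi G (Suc n) (2 * j + 1) = bG G (sba lo hi G n j) (sba lo hi G n (Suc j))"
  using assms odd_neq_two_pow_Suc[of j n] by simp

lemma sba_1_1: "sba lo hi G 1 1 = ereal (LINT x|G. x)"
  by simp

declare sba.simps [simp del]

locale sba_partition = interval_supported_prob +
  fixes lo hi :: ereal
  assumes lo_le_a: "lo \<le> ereal a" and b_le_hi: "ereal b \<le> hi"
begin

abbreviation \<mu> :: "nat \<Rightarrow> nat \<Rightarrow> ereal" where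
  "\<mu> \<equiv> sba lo hi G"

(* The SBA points as reals, with the possibly infinite end points lo, hi replaced by the end
   points a, b of the support. *)
definition node :: "nat \<Rightarrow> nat \<Rightarrow> real" where
  "node n k = (if k = 0 then a else if k = 2 ^ n then b else real_of_ereal (\<mu> n k))"

definition cell :: "nat \<Rightarrow> nat \<Rightarrow> real set" where
  "cell n j = {x. \<mu> n j < ereal x \<and> ereal x \<le> \<mu> n (Suc j)}"

definition regular :: "nat \<Rightarrow> bool" where
  "regular n \<longleftrightarrow>
    (\<forall>k. 0 < k \<and> k < 2 ^ n \<longrightarrow> \<mu> n k = ereal (node n k) \<and> a < node n k \<and> node n k < b) \<and>
    (\<forall>j<2 ^ n. node n j < node n (Suc j))"

lemma node_0 [simp]: "node n 0 = a"
  by (simp add: node_def)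

lemma node_last [simp]: "node n (2 ^ n) = b"
  by (simp add: node_def)

lemma cell_sets [measurable]: "cell n j \<in> sets borel"
  unfolding cell_def by measurable

context
  fixes n :: nat
  assumes n: "1 \<le> n" and reg: "regular n"
begin

lemma sba_eq_node: "0 < k \<Longrightarrow> k < 2 ^ n \<Longrightarrow> \<mu> n k = ereal (node n k)"
  using reg by (simp add: regular_def)

lemma node_less_Suc: "j < 2 ^ n \<Longrightarrow> node n j < node n (Suc j)"
  using reg by (simp add: regular_def)

lemma node_between: "k \<le> 2 ^ n \<Longrightarrow> a \<le> node n k \<and> node n k \<le> b"
  using reg a_less_b unfolding regular_def
  by (cases "k = 0 \<or> k = 2 ^ n") (auto simp: less_imp_le)

lemma sba_le_node: "j < 2 ^ n \<Longrightarrow> \<mu> n j \<le> ereal (node n j)"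
  using lo_le_a sba_eq_node[of j] by (cases "j = 0") auto

lemma node_le_sba: "0 < k \<Longrightarrow> k \<le> 2 ^ n \<Longrightarrow> ereal (node n k) \<le> \<mu> n k"
  using b_le_hi sba_eq_node[of k] sba_last[OF n] by (cases "k = 2 ^ n") auto

lemma cell_inner:
  assumes j: "j < 2 ^ n"
  shows "{node n j<..<node n (Suc j)} \<subseteq> cell n j"
proof
  fix x assume x: "x \<in> {node n j<..<node n (Suc j)}"
  have "\<mu> n j < ereal x"
    using order.strict_trans1[OF sba_le_node[OF j], of "ereal x"] x by simp
  moreover have "ereal x \<le> \<mu> n (Suc j)"
    using order.trans[OF _ node_le_sba[of "Suc j"], of "ereal x"] x j by simp
  ultimately show "x \<in> cell n j" by (simp add: cell_def)
qed

lemma cell_outer: "j < 2 ^ n \<Longrightarrow> cell n j \<inter> {a..b} \<subseteq> {node n j..node n (Suc j)}"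
  using sba_eq_node[of j] sba_eq_node[of "Suc j"] two_le_pow[OF n] unfolding cell_def
  by (cases "j = 0"; cases "Suc j = 2 ^ n") auto

lemma centroid_cell_between:
  assumes "j < 2 ^ n"
  shows "0 < measure G (cell n j)" "node n j < centroid (cell n j)" "centroid (cell n j) < node n (Suc j)"
proof -
  have "a \<le> node n j" "node n (Suc j) \<le> b"
    using node_between[of j] node_between[of "Suc j"] assms by auto
  note bounds = moment_strict_bounds[OF cell_sets node_less_Suc[OF assms] this
      cell_inner[OF assms] cell_outer[OF assms]]
  then show "0 < measure G (cell n j)" by simp
  then show "node n j < centroid (cell n j)" "centroid (cell n j) < node n (Suc j)"
    using bounds by (simp_all add: centroid_def pos_less_divide_eq pos_divide_less_eq)
qed

lemma sba_Suc_odd_centroid: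
  assumes "j < 2 ^ n"
  shows "\<mu> (Suc n) (2 * j + 1) = ereal (centroid (cell n j))"
proof -
  have "\<mu> n j \<le> \<mu> n (Suc j)"
    using sba_le_node[OF assms] node_less_Suc[OF assms] node_le_sba[of "Suc j"] assms
    by (meson Suc_leI order.trans less_ereal.simps(1) less_imp_le zero_less_Suc)
  then show ?thesis
    using sba_Suc_odd[OF n assms] bG_eq_centroid centroid_cell_between(1)[OF assms]
    by (simp add: cell_def)
qed

lemma node_Suc_even: "j \<le> 2 ^ n \<Longrightarrow> node (Suc n) (2 * j) = node n j"
  using sba_Suc_even[OF n] by (auto simp: node_def)

lemma node_Suc_odd: "j < 2 ^ n \<Longrightarrow> node (Suc n) (2 * j + 1) = centroid (cell n j)"
  using sba_Suc_odd_centroid odd_neq_two_pow_Suc[of j n] by (simp add: node_def)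

lemma nodes_Suc_within:
  assumes i: "i < 2 ^ Suc n"
  shows "node n (i div 2) \<le> node (Suc n) i" "node (Suc n) i < node (Suc n) (Suc i)"
    "node (Suc n) (Suc i) \<le> node n (Suc (i div 2))"
proof -
  define j where "j = i div 2"
  have j: "j < 2 ^ n" using i by (simp add: j_def less_mult_imp_div_less)
  note c = centroid_cell_between[OF j]
  have "i = 2 * j \<or> i = 2 * j + 1" unfolding j_def by presburger
  then consider (even) "i = 2 * j" | (odd) "i = 2 * j + 1" by blast
  then have "node n j \<le> node (Suc n) i \<and> node (Suc n) i < node (Suc n) (Suc i)
      \<and> node (Suc n) (Suc i) \<le> node n (Suc j)"
  proof cases
    case even
    then show ?thesis using node_Suc_even[of j] node_Suc_odd[OF j] c j by simp
  next
    case odd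
    moreover have "Suc (2 * j + 1) = 2 * Suc j" by simp
    ultimately show ?thesis using node_Suc_even[of "Suc j"] node_Suc_odd[OF j] c j by simp
  qed
  then show "node n (i div 2) \<le> node (Suc n) i" "node (Suc n) i < node (Suc n) (Suc i)"
    "node (Suc n) (Suc i) \<le> node n (Suc (i div 2))"
    unfolding j_def by auto
qed

lemma regular_Suc: "regular (Suc n)"
  unfolding regular_def
proof (rule conjI; intro allI impI)
  fix k :: nat assume k: "0 < k \<and> k < 2 ^ Suc n"
  obtain j :: nat where "k = 2 * j \<or> k = 2 * j + 1"
    by (metis oddE evenE)
  then show "\<mu> (Suc n) k = ereal (node (Suc n) k) \<and> a < node (Suc n) k \<and> node (Suc n) k < b"
  proof
    assume kj: "k = 2 * j"
    then have "0 < j" "j < 2 ^ n" using k by auto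
    then show ?thesis
      using kj reg sba_Suc_even[OF n, of j] node_Suc_even[of j] by (auto simp: regular_def)
  next
    assume kj: "k = 2 * j + 1"
    then have j: "j < 2 ^ n" using k by auto
    then show ?thesis
      using kj sba_Suc_odd_centroid[OF j] node_Suc_odd[OF j] centroid_cell_between[OF j]
        node_between[of j] node_between[of "Suc j"] by auto
  qed
qed (rule nodes_Suc_within(2))

lemma cell_Suc_even:
  assumes j: "j < 2 ^ n"
  shows "cell (Suc n) (2 * j) = below_centroid (cell n j)"
proof -
  have "ereal (centroid (cell n j)) \<le> \<mu> n (Suc j)"
    using centroid_cell_between(3)[OF j] node_le_sba[of "Suc j"] j
    by (meson Suc_leI ereal_less_eq(3) less_imp_le order.trans zero_less_Suc)
  then have "ereal x \<le> \<mu> n (Suc j)" if "x \<le> centroid (cell n j)" for x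
    using that by (metis ereal_less_eq(3) order.trans)
  moreover have "\<mu> (Suc n) (Suc (2 * j)) = ereal (centroid (cell n j))"
    using sba_Suc_odd_centroid[OF j] by simp
  ultimately show ?thesis
    using sba_Suc_even[OF n, of j] j by (auto simp: cell_def below_centroid_def)
qed

lemma cell_Suc_odd:
  assumes j: "j < 2 ^ n"
  shows "cell (Suc n) (2 * j + 1) = above_centroid (cell n j)"
proof -
  have "\<mu> n j \<le> ereal (centroid (cell n j))"
    using sba_le_node[OF j] centroid_cell_between(2)[OF j] by (auto intro: order.trans)
  moreover have "Suc (2 * j + 1) = 2 * Suc j" by simp
  ultimately show ?thesis
    using sba_Suc_even[OF n, of "Suc j"] sba_Suc_odd_centroid[OF j] j
    by (auto simp: cell_def above_centroid_def intro: order.strict_trans1)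
qed

end

lemma regular_1: "regular 1"
proof -
  have "moment UNIV = (LINT x|G. x)"
    by (simp add: moment_def set_lebesgue_integral_def)
  then have mean: "a < (LINT x|G. x)" "(LINT x|G. x) < b"
    using moment_strict_bounds[of UNIV a b] a_less_b prob_space by auto
  have node_1: "node 1 1 = (LINT x|G. x)"
    using sba_1_1 by (simp add: node_def)
  show ?thesis
    unfolding regular_def
  proof (rule conjI; intro allI impI)
    fix k :: nat assume "0 < k \<and> k < 2 ^ 1"
    then have "k = 1" by simp
    then show "\<mu> 1 k = ereal (node 1 k) \<and> a < node 1 k \<and> node 1 k < b"
      using mean node_1 sba_1_1 by simp
  next
    fix j :: nat assume "j < 2 ^ 1"
    then have "j = 0 \<or> j = 1" by auto
    then show "node 1 j < node 1 (Suc j)"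
      using mean node_1 node_last[of 1] by (auto simp: numeral_2_eq_2)
  qed
qed

lemma regular: "1 \<le> n \<Longrightarrow> regular n"
proof (induction n rule: nat_induct_at_least)
  case base
  then show ?case by (rule regular_1)
next
  case (Suc n)
  then show ?case by (rule regular_Suc)
qed

section \<open>The mesh of the SBA partitions tends to zero\<close>

definition potential :: "nat \<Rightarrow> real" where
  "potential n = (\<Sum>j<2 ^ n. energy (cell n j))"

lemma measure_cell_split:
  assumes "1 \<le> n" "j < 2 ^ n"
  shows "measure G (cell n j) = measure G (cell (Suc n) (2 * j)) + measure G (cell (Suc n) (2 * j + 1))"
  using measure_centroid_split[OF cell_sets] cell_Suc_even[OF assms(1) regular[OF assms(1)] assms(2)]
    cell_Suc_odd[OF assms(1) regular[OF assms(1)] assms(2)] by simp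

lemma total_mass_le_1: "1 \<le> n \<Longrightarrow> (\<Sum>j<2 ^ n. measure G (cell n j)) \<le> 1"
proof (induction n rule: nat_induct_at_least)
  case base
  have "cell 1 0 \<inter> cell 1 1 = {}"
    by (auto simp: cell_def)
  then have "(\<Sum>j<2 ^ 1. measure G (cell 1 j)) = measure G (cell 1 0 \<union> cell 1 1)"
    by (simp add: numeral_2_eq_2 finite_measure_Union)
  then show ?case by simp
next
  case (Suc n)
  have "(\<Sum>j<2 ^ Suc n. measure G (cell (Suc n) j))
      = (\<Sum>j<2 ^ n. measure G (cell (Suc n) (2 * j)) + measure G (cell (Suc n) (2 * j + 1)))"
    using sum_lessThan_double[of "\<lambda>j. measure G (cell (Suc n) j)" "2 ^ n"] by simp
  also have "\<dots> = (\<Sum>j<2 ^ n. measure G (cell n j))"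
    using measure_cell_split[OF Suc.hyps] by simp
  finally show ?case using Suc.IH by simp
qed

lemma potential_nonneg: "0 \<le> potential n"
  unfolding potential_def energy_def by (intro sum_nonneg divide_nonneg_nonneg) auto

lemma potential_le: "1 \<le> n \<Longrightarrow> potential n \<le> (\<bar>a\<bar> + \<bar>b\<bar>)^2"
proof -
  assume n: "1 \<le> n"
  have "potential n \<le> (\<Sum>j<2 ^ n. (\<bar>a\<bar> + \<bar>b\<bar>)^2 * measure G (cell n j))"
    unfolding potential_def energy_def by (intro sum_mono sq_moment_div_le) simp
  also have "\<dots> \<le> (\<bar>a\<bar> + \<bar>b\<bar>)^2"
    using total_mass_le_1[OF n] by (simp add: sum_distrib_left[symmetric] mult_left_le)
  finally show ?thesis .
qed

definition energy_gain :: "nat \<Rightarrow> nat \<Rightarrow> real" where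
  "energy_gain n j = energy (cell (Suc n) (2 * j)) + energy (cell (Suc n) (2 * j + 1)) - energy (cell n j)"

lemma potential_Suc: "potential (Suc n) = potential n + (\<Sum>j<2 ^ n. energy_gain n j)"
  using sum_lessThan_double[of "\<lambda>j. energy (cell (Suc n) j)" "2 ^ n"]
  by (simp add: potential_def energy_gain_def sum.distrib sum_subtractf)

lemma energy_gain_ge:
  assumes n: "1 \<le> n" and j: "j < 2 ^ n"
  shows "(centroid (cell n j) * measure G (below_centroid (cell n j)) - moment (below_centroid (cell n j)))^2
    \<le> energy_gain n j"
proof -
  have "2 * j < 2 ^ Suc n" "2 * j + 1 < 2 ^ Suc n" using j by auto
  then have "0 < measure G (cell (Suc n) (2 * j))" "0 < measure G (cell (Suc n) (2 * j + 1))"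
    using centroid_cell_between(1)[of "Suc n"] regular[of "Suc n"] n by auto
  then show ?thesis
    using energy_split_ge[OF cell_sets] cell_Suc_even[OF n regular[OF n] j]
      cell_Suc_odd[OF n regular[OF n] j] by (simp add: energy_gain_def)
qed

definition mesh :: "nat \<Rightarrow> real" where
  "mesh n = Max ((\<lambda>j. node n (Suc j) - node n j) ` {..<2 ^ n})"

lemma gap_le_mesh: "j < 2 ^ n \<Longrightarrow> node n (Suc j) - node n j \<le> mesh n"
  unfolding mesh_def by (intro Max_ge) auto

lemma mesh_attained: "\<exists>j<2 ^ n. mesh n = node n (Suc j) - node n j"
proof -
  have "mesh n \<in> (\<lambda>j. node n (Suc j) - node n j) ` {..<2 ^ n}"
    unfolding mesh_def by (intro Max_in) (auto simp: lessThan_empty_iff)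
  then show ?thesis by auto
qed

lemma mesh_Suc_le:
  assumes n: "1 \<le> n"
  shows "mesh (Suc n) \<le> mesh n"
proof -
  obtain i where i: "i < 2 ^ Suc n" and eq: "mesh (Suc n) = node (Suc n) (Suc i) - node (Suc n) i"
    using mesh_attained by blast
  have "node (Suc n) (Suc i) - node (Suc n) i \<le> node n (Suc (i div 2)) - node n (i div 2)"
    using nodes_Suc_within[OF n regular[OF n] i] by linarith
  also have "\<dots> \<le> mesh n"
    using i by (intro gap_le_mesh) (simp add: less_mult_imp_div_less)
  finally show ?thesis using eq by simp
qed

lemma mesh_antimono:
  assumes "1 \<le> n" "n \<le> m"
  shows "mesh m \<le> mesh n"
  using assms(2)
proof (induction m rule: dec_induct)
  case (step m)
  then show ?case using mesh_Suc_le[of m] assms(1) by simp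
qed simp

lemma potential_Suc_ge:
  assumes n: "1 \<le> n" and \<epsilon>: "0 < \<epsilon>" "\<epsilon> \<le> mesh n" and "0 < \<kappa>"
    and \<kappa>: "\<And>t. a \<le> t \<Longrightarrow> t + \<epsilon> / 4 \<le> b \<Longrightarrow> \<kappa> \<le> measure G {t<..<t + \<epsilon> / 4}"
  shows "potential n + (\<epsilon> / 4 * \<kappa>)^2 \<le> potential (Suc n)"
proof -
  obtain j where j: "j < 2 ^ n" and gap: "\<epsilon> \<le> node n (Suc j) - node n j"
    using mesh_attained[of n] \<epsilon> by auto
  have "a \<le> node n j" "node n (Suc j) \<le> b"
    using node_between[OF n regular[OF n], of j] node_between[OF n regular[OF n], of "Suc j"] j by auto
  then have "\<epsilon> / 4 * \<kappa> \<le> centroid (cell n j) * measure G (below_centroid (cell n j))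
      - moment (below_centroid (cell n j))"
    using centroid_cell_between(1)[OF n regular[OF n] j] cell_inner[OF n regular[OF n] j] gap \<epsilon>
    by (intro below_centroid_deficit_ge[OF cell_sets _ _ _ _ _ _ \<kappa>]) auto
  then have "(\<epsilon> / 4 * \<kappa>)^2 \<le> (centroid (cell n j) * measure G (below_centroid (cell n j))
      - moment (below_centroid (cell n j)))^2"
    using \<epsilon> \<open>0 < \<kappa>\<close> by (intro power_mono) auto
  also have "\<dots> \<le> energy_gain n j"
    using energy_gain_ge[OF n j] .
  also have "\<dots> \<le> (\<Sum>i<2 ^ n. energy_gain n i)"
    using j energy_gain_ge[OF n] by (intro member_le_sum) (auto intro: order.trans[OF zero_le_power2])
  finally show ?thesis using potential_Suc[of n] by simp
qed

lemma mesh_nonneg: "1 \<le> n \<Longrightarrow> 0 \<le> mesh n"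
  using gap_le_mesh[of 0 n] node_less_Suc[OF _ regular, of n 0] by simp

lemma ex_mesh_less:
  assumes \<epsilon>: "0 < \<epsilon>"
  shows "\<exists>n\<ge>1. mesh n < \<epsilon>"
proof (rule ccontr)
  assume "\<not> (\<exists>n\<ge>1. mesh n < \<epsilon>)"
  then have large: "\<epsilon> \<le> mesh n" if "1 \<le> n" for n
    using that by (simp add: not_less)
  obtain \<kappa> where "0 < \<kappa>"
    and \<kappa>: "\<And>t. a \<le> t \<Longrightarrow> t + \<epsilon> / 4 \<le> b \<Longrightarrow> \<kappa> \<le> measure G {t<..<t + \<epsilon> / 4}"
    using measure_intervals_uniformly_pos[of "\<epsilon> / 4"] \<epsilon> by auto
  define K where "K = (\<epsilon> / 4 * \<kappa>)^2"
  have "0 < K" using \<epsilon> \<open>0 < \<kappa>\<close> by (simp add: K_def)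
  have grow: "real i * K \<le> potential (Suc i)" for i
  proof (induction i)
    case 0
    then show ?case using potential_nonneg by simp
  next
    case (Suc i)
    then show ?case
      using potential_Suc_ge[OF _ \<epsilon> large \<open>0 < \<kappa>\<close> \<kappa>, of "Suc i"] unfolding K_def
      by (simp add: algebra_simps)
  qed
  obtain i where "(\<bar>a\<bar> + \<bar>b\<bar>)^2 < real i * K"
    using reals_Archimedean3[OF \<open>0 < K\<close>] by blast
  then show False
    using grow[of i] potential_le[of "Suc i"] by simp
qed

lemma mesh_tendsto_0: "mesh \<longlonglongrightarrow> 0"
proof (rule order_tendstoI)
  fix y :: real assume "y < 0"
  then show "eventually (\<lambda>n. y < mesh n) sequentially"
    unfolding eventually_sequentially using mesh_nonneg by force
next
  fix \<epsilon> :: real assume "0 < \<epsilon>"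
  then obtain N where "1 \<le> N" "mesh N < \<epsilon>"
    using ex_mesh_less by blast
  then show "eventually (\<lambda>n. mesh n < \<epsilon>) sequentially"
    unfolding eventually_sequentially using mesh_antimono by (force intro: order.strict_trans1)
qed

lemma Theta_bar_subset_nodes:
  assumes n: "1 \<le> n" and j: "j < 2 ^ n"
  shows "Theta_bar lo hi G n (Suc j) \<subseteq> {node n j..node n (Suc j)}"
proof
  fix x assume x: "x \<in> Theta_bar lo hi G n (Suc j)"
  note sba_eq = sba_eq_node[OF n regular[OF n]]
  have two: "2 \<le> (2::nat) ^ n" using two_le_pow[OF n] .
  consider (first) "j = 0" | (last) "0 < j" "Suc j = 2 ^ n" | (inner) "0 < j" "Suc j < 2 ^ n"
    using j by linarith
  then show "x \<in> {node n j..node n (Suc j)}"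
  proof cases
    case first
    have "ereal x \<le> \<mu> n 1" "x \<in> msupp G"
      using x first unfolding Theta_bar_def Theta_nl_def Let_def by (auto split: if_splits)
    then show ?thesis using first sba_eq[of 1] two msupp_eq by auto
  next
    case last
    then have "j = 2 ^ n - 1" "Suc j \<noteq> 1" using n by auto
    then have "\<mu> n j < ereal x" "x \<in> msupp G"
      using x last unfolding Theta_bar_def Theta_nl_def Let_def by (auto split: if_splits)
    then show ?thesis using last sba_eq[of j] msupp_eq by auto
  next
    case inner
    then have "\<mu> n j < ereal x" "ereal x \<le> \<mu> n (Suc j)"
      using x unfolding Theta_bar_def Theta_nl_def Let_def by (auto split: if_splits)
    then show ?thesis using inner sba_eq[of j] sba_eq[of "Suc j"] by auto
  qed
qed

lemma emeasure_Theta_bar_le_mesh: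
  assumes n: "1 \<le> n" and k: "k \<in> {1..2 ^ n}"
  shows "emeasure lborel (Theta_bar lo hi G n k) \<le> ennreal (mesh n)"
proof -
  obtain j where kj: "k = Suc j" and j: "j < 2 ^ n"
    using k by (cases k) auto
  have "emeasure lborel (Theta_bar lo hi G n k) \<le> emeasure lborel {node n j..node n (Suc j)}"
    using Theta_bar_subset_nodes[OF n j] kj by (intro emeasure_mono) auto
  also have "\<dots> = ennreal (node n (Suc j) - node n j)"
    using node_less_Suc[OF n regular[OF n] j] by simp
  also have "\<dots> \<le> ennreal (mesh n)"
    using gap_le_mesh[OF j] by (rule ennreal_leI)
  finally show ?thesis .
qed

lemma Max_emeasure_Theta_bar_tendsto_0:
  "(\<lambda>n. Max ((\<lambda>k. emeasure lborel (Theta_bar lo hi G n k)) ` {1..2 ^ n})) \<longlonglongrightarrow> 0"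
proof (rule tendsto_sandwich[OF _ _ tendsto_const])
  show "eventually (\<lambda>n. Max ((\<lambda>k. emeasure lborel (Theta_bar lo hi G n k)) ` {1..2 ^ n})
      \<le> ennreal (mesh n)) sequentially"
    unfolding eventually_sequentially
    using emeasure_Theta_bar_le_mesh by (intro exI[of _ 1] allI impI) (simp add: Max_le_iff)
  show "(\<lambda>n. ennreal (mesh n)) \<longlonglongrightarrow> 0"
    using tendsto_ennrealI[OF mesh_tendsto_0] by simp
qed simp

end

theorem lemma2:
  fixes lo hi :: ereal and G :: "real measure" and l :: "nat \<Rightarrow> nat"
  assumes "admissible_Theta lo hi"
    and "P_star lo hi G"
    and "\<And>n. n \<ge> 1 \<Longrightarrow> l n \<in> {1..2 ^ n}"
    and "\<And>n. n \<ge> 1 \<Longrightarrow> Theta_bar lo hi G (Suc n) (l (Suc n)) \<subseteq> Theta_bar lo hi G n (l n)"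
  shows "(\<lambda>n. emeasure lborel (Theta_bar lo hi G n (l n))) \<longlonglongrightarrow> 0 \<and>
     (\<lambda>n. Max ((\<lambda>k. emeasure lborel (Theta_bar lo hi G n k)) ` {1..2 ^ n})) \<longlonglongrightarrow> 0"
proof -
  obtain a b where "prob_space G" "sets G = sets borel" "a < b" "msupp G = {a..b}"
    and Theta: "emeasure G (Theta_set lo hi) = 1"
    using assms(2) unfolding P_star_def by blast
  then interpret interval_supported_prob G a b
    by (intro interval_supported_prob.intro interval_supported_prob_axioms.intro)
  interpret sba_partition G a b lo hi
    using Theta_set_bounds[OF Theta] by unfold_locales
  have Max: "(\<lambda>n. Max ((\<lambda>k. emeasure lborel (Theta_bar lo hi G n k)) ` {1..2 ^ n})) \<longlonglongrightarrow> 0"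
    by (rule Max_emeasure_Theta_bar_tendsto_0)
  have "(\<lambda>n. emeasure lborel (Theta_bar lo hi G n (l n))) \<longlonglongrightarrow> 0"
  proof (rule tendsto_sandwich[OF _ _ tendsto_const Max])
    show "eventually (\<lambda>n. emeasure lborel (Theta_bar lo hi G n (l n))
        \<le> Max ((\<lambda>k. emeasure lborel (Theta_bar lo hi G n k)) ` {1..2 ^ n})) sequentially"
      unfolding eventually_sequentially using assms(3) by (intro exI[of _ 1] allI impI Max_ge) auto
  qed simp
  with Max show ?thesis by simp
qed

end
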